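(* In the construction below, for every $k\in\{0,\dots,K-1\}$ and every $u\in U_k$, $$\sum_{w:(u,w)\in A_k}|B_X(w,\tau^{-(k+1)}/3)|\le|B_X(u,6\tau^{-k})|.$$
   Context: Construction. Let $(X,d)$ be a metric space with $n=|X|\ge2$ and $\mathrm{diam}(X)=1$. For $S\subseteq X$, $r\ge0$: $B_X(S,r):=\{x\in X:\exists s\in S,\ d(x,s)\le r\}$ and $B_X(x,r):=B_X(\{x\},r)$. Let $\varepsilon_0:=\min\{d(x,y):x\ne y\}$, $\tau:=12$, $K:=1+\lceil\log_\tau(1/\varepsilon_0)\rceil$. For $\eta>0$ the greedy $\eta$-net is built as: $N_0=\emptyset$; for $j\ge1$, $S_j:=X\setminus B_X(N_{j-1},\eta)$; if $S_j=\emptyset$ output $N_{j-1}$; else pick $x_j\in S_j$ maximizing $|B_X(x,\eta/3)|$ and set $N_j=N_{j-1}\cup\{x_j\}$. For $k=0,\dots,K$ let $U_k$ be the greedy $\tau^{-k}$-net. For $k<K$, $A_k$ is the set of pairs $(u,u')\in U_k\times U_{k+1}$ with (i) $d(u,u')\le4\tau^{-k}$ and (ii) $|B_X(u,\tau^{-k}/3)|\ge\max\{|B_X(w,\tau^{-k}/3)|:w\in B_X(u',6\tau^{-(k+1)})\}$. *)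

theory Defs
  imports "HOL-Analysis.Analysis"
begin

definition setball :: "'a::metric_space set \<Rightarrow> 'a set \<Rightarrow> real \<Rightarrow> 'a set" where
  "setball X S r = {x \<in> X. \<exists>s\<in>S. dist x s \<le> r}"

definition ptball :: "'a::metric_space set \<Rightarrow> 'a \<Rightarrow> real \<Rightarrow> 'a set" where
  "ptball X x r = setball X {x} r"

definition tau :: real where "tau = 12"

definition eps0 :: "'a::metric_space set \<Rightarrow> real" where
  "eps0 X = Min {dist x y | x y. x \<in> X \<and> y \<in> X \<and> x \<noteq> y}"

definition Klev :: "'a::metric_space set \<Rightarrow> nat" where
  "Klev X = 1 + nat \<lceil>log tau (1 / eps0 X)\<rceil>"

text \<open>Partial runs of the greedy eta-net construction (arbitrary tie-breaking):
  N is a possible value of some N_j.\<close>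
inductive greedy_run :: "'a::metric_space set \<Rightarrow> real \<Rightarrow> 'a set \<Rightarrow> bool"
  for X :: "'a set" and eta :: real where
  start: "greedy_run X eta {}"
| step: "greedy_run X eta N \<Longrightarrow> x \<in> X - setball X N eta \<Longrightarrow>
    (\<forall>y \<in> X - setball X N eta. card (ptball X y (eta/3)) \<le> card (ptball X x (eta/3))) \<Longrightarrow>
    greedy_run X eta (insert x N)"

text \<open>U is a possible output of the greedy eta-net construction: a run that stops
  because S_j is empty.\<close>
definition greedy_net :: "'a::metric_space set \<Rightarrow> real \<Rightarrow> 'a set \<Rightarrow> bool" where
  "greedy_net X eta U \<longleftrightarrow> greedy_run X eta U \<and> X - setball X U eta = {}"

definition arcs :: "'a::metric_space set \<Rightarrow> (nat \<Rightarrow> 'a set) \<Rightarrow> nat \<Rightarrow> ('a \<times> 'a) set" where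
  "arcs X U k = {(u, u'). u \<in> U k \<and> u' \<in> U (Suc k) \<and>
      dist u u' \<le> 4 * tau powi (- int k) \<and>
      card (ptball X u (tau powi (- int k) / 3)) \<ge>
        Max ((\<lambda>w. card (ptball X w (tau powi (- int k) / 3))) `
               ptball X u' (6 * tau powi (- int (Suc k))))}"

end

theory Submission
  imports Defs
begin

text \<open>The second endpoints of the arcs at u lie in the \<tau>^-(k+1)-separated net U_(k+1) and
  within 4\<tau>^-k of u. Their balls of radius \<tau>^-(k+1)/3 are therefore pairwise disjoint and,
  since \<tau>^-(k+1)/3 + 4\<tau>^-k \<le> 6\<tau>^-k, all contained in the ball of radius 6\<tau>^-k around u;
  the sum of their cardinalities is the cardinality of their union.\<close>

lemma greedy_run_subset: "greedy_run X eta N \<Longrightarrow> N \<subseteq> X"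
  by (induction rule: greedy_run.induct) auto

lemma greedy_run_separated:
  assumes "greedy_run X eta N" and "a \<in> N" and "b \<in> N" and "a \<noteq> b"
  shows "eta < dist a b"
  using assms
proof (induction arbitrary: a b rule: greedy_run.induct)
  case start
  then show ?case by simp
next
  case (step N x)
  have "\<forall>s\<in>N. eta < dist x s"
    using step.hyps(2) by (auto simp: setball_def not_le)
  then show ?case
    using step.IH step.prems by (auto simp: dist_commute)
qed

lemma finite_ptball: "finite X \<Longrightarrow> finite (ptball X x r)"
  by (simp add: ptball_def setball_def)

lemma ptball_disjoint:
  assumes "2 * r < dist a b"
  shows "ptball X a r \<inter> ptball X b r = {}"
proof -
  have False if "dist z a \<le> r" "dist z b \<le> r" for z
    using dist_triangle3[of a b z] that assms by (simp add: dist_commute)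
  then show ?thesis by (auto simp: ptball_def setball_def)
qed

lemma ptball_subset_ptball:
  assumes "dist u w + r \<le> R"
  shows "ptball X w r \<subseteq> ptball X u R"
proof
  fix z assume "z \<in> ptball X w r"
  then have "z \<in> X" "dist z w \<le> r" by (auto simp: ptball_def setball_def)
  moreover have "dist z u \<le> dist z w + dist w u" by (rule dist_triangle)
  ultimately show "z \<in> ptball X u R"
    using assms by (auto simp: ptball_def setball_def dist_commute)
qed

lemma sum_card_ptball_packing:
  assumes "finite X" and "W \<subseteq> X"
    and sep: "\<And>a b. a \<in> W \<Longrightarrow> b \<in> W \<Longrightarrow> a \<noteq> b \<Longrightarrow> 2 * r < dist a b"
    and near: "\<And>w. w \<in> W \<Longrightarrow> dist u w + r \<le> R"
  shows "(\<Sum>w\<in>W. card (ptball X w r)) \<le> card (ptball X u R)"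
proof -
  have "finite W" using assms(1,2) by (rule rev_finite_subset)
  moreover have "ptball X a r \<inter> ptball X b r = {}" if "a \<in> W" "b \<in> W" "a \<noteq> b" for a b
    using sep[OF that] by (rule ptball_disjoint)
  ultimately have "(\<Sum>w\<in>W. card (ptball X w r)) = card (\<Union>w\<in>W. ptball X w r)"
    using \<open>finite X\<close> by (intro card_UN_disjoint[symmetric]) (auto simp: finite_ptball)
  also have "\<dots> \<le> card (ptball X u R)"
  proof (rule card_mono[OF finite_ptball[OF \<open>finite X\<close>]])
    show "(\<Union>w\<in>W. ptball X w r) \<subseteq> ptball X u R"
      using ptball_subset_ptball[OF near] by blast
  qed
  finally show ?thesis .
qed

lemma tau_powi_minus_Suc: "tau powi (- int (Suc k)) = tau powi (- int k) / 12"
  by (simp add: tau_def power_int_diff power_int_minus divide_simps)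

theorem claim3p4:
  fixes X :: "'a::metric_space set" and U :: "nat \<Rightarrow> 'a set"
  assumes "finite X" and "card X \<ge> 2" and "diameter X = 1"
    and "\<forall>k \<le> Klev X. greedy_net X (tau powi (- int k)) (U k)"
    and "k < Klev X" and "u \<in> U k"
  shows "(\<Sum>w \<in> {w. (u, w) \<in> arcs X U k}. card (ptball X w (tau powi (- int (Suc k)) / 3)))
           \<le> card (ptball X u (6 * tau powi (- int k)))"
proof -
  define R where "R = tau powi (- int k)"
  define r where "r = tau powi (- int (Suc k))"
  have r_R: "r = R / 12"
    unfolding r_def R_def by (rule tau_powi_minus_Suc)
  have "R > 0"
    unfolding R_def tau_def by simp
  define W where "W = {w. (u, w) \<in> arcs X U k}"
  have net: "greedy_run X r (U (Suc k))"
    using assms(4)[rule_format, of "Suc k"] assms(5) by (simp add: greedy_net_def r_def)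
  have W_net: "W \<subseteq> U (Suc k)" and near: "\<And>w. w \<in> W \<Longrightarrow> dist u w \<le> 4 * R"
    by (auto simp: W_def arcs_def R_def)
  have "(\<Sum>w\<in>W. card (ptball X w (r / 3))) \<le> card (ptball X u (6 * R))"
  proof (rule sum_card_ptball_packing[OF \<open>finite X\<close>])
    show "W \<subseteq> X" using W_net greedy_run_subset[OF net] by blast
    show "2 * (r / 3) < dist a b" if "a \<in> W" "b \<in> W" "a \<noteq> b" for a b
    proof -
      have "r < dist a b"
        using greedy_run_separated[OF net, of a b] W_net that by blast
      then show ?thesis using \<open>R > 0\<close> r_R by simp
    qed
    show "dist u w + r / 3 \<le> 6 * R" if "w \<in> W" for w
      using near[OF that] \<open>R > 0\<close> r_R by simp
  qed
  then show ?thesis by (simp add: W_def r_def R_def)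
qed

end
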